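(* Let $\mu$ be a PU-monotone. If $A\in H_n$ and $B\in H_k$ are both neither positive semidefinite nor negative semidefinite and satisfy $\|A_+\|_\infty\geq\|B_+\|_\infty$ and $\|A_-\|_\infty\geq\|B_-\|_\infty$, then $\mu(A)\geq\mu(B)$. That is, restricted to non-definite matrices, $\mu$ is a non-decreasing function of both $\|A_+\|_\infty$ and $\|A_-\|_\infty$.
   Context: $H_n$ denotes the $n\times n$ complex Hermitian matrices. A linear map $\Phi:H_n\to H_k$ is PU if it maps positive semidefinite matrices to positive semidefinite matrices and $\Phi(\mathbb{1})=\mathbb{1}$. A function $\mu:\bigcup_{n\in\mathbb N}H_n\to\mathbb R$ is a PU-monotone if $\mu(\Phi(A))\leq\mu(A)$ for all $n,k$, all PU maps $\Phi:H_n\to H_k$ and all $A\in H_n$. Every $A$ decomposes uniquely as $A=A_+-A_-$ with $A_\pm$ positive semidefinite and $A_+A_-=0$. $\|\cdot\|_\infty$ is the operator norm. *)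

theory Defs
  imports "Jordan_Normal_Form.Matrix" Complex_Main
begin

definition herm :: "nat \<Rightarrow> complex mat set" where
  "herm n = {A. A \<in> carrier_mat n n \<and> (\<forall>i<n. \<forall>j<n. A $$ (i,j) = cnj (A $$ (j,i)))}"

definition psd :: "complex mat \<Rightarrow> bool" where
  "psd A \<longleftrightarrow> A \<in> herm (dim_row A) \<and>
     (\<forall>v \<in> carrier_vec (dim_row A). 0 \<le> Re ((A *\<^sub>v v) \<bullet>c v))"

text \<open>Positive unital linear maps H_n \<rightarrow> H_k (only the values on H_n matter).\<close>
definition PU_map :: "nat \<Rightarrow> nat \<Rightarrow> (complex mat \<Rightarrow> complex mat) \<Rightarrow> bool" where
  "PU_map n k \<Phi> \<longleftrightarrow>
     (\<forall>A \<in> herm n. \<Phi> A \<in> herm k) \<and>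
     (\<forall>A \<in> herm n. \<forall>B \<in> herm n. \<Phi> (A + B) = \<Phi> A + \<Phi> B) \<and>
     (\<forall>A \<in> herm n. \<forall>r::real. \<Phi> (complex_of_real r \<cdot>\<^sub>m A) = complex_of_real r \<cdot>\<^sub>m \<Phi> A) \<and>
     (\<forall>A \<in> herm n. psd A \<longrightarrow> psd (\<Phi> A)) \<and>
     \<Phi> (1\<^sub>m n) = 1\<^sub>m k"

definition PU_monotone :: "(complex mat \<Rightarrow> real) \<Rightarrow> bool" where
  "PU_monotone \<mu> \<longleftrightarrow>
     (\<forall>n k \<Phi> A. 0 < n \<longrightarrow> 0 < k \<longrightarrow> PU_map n k \<Phi> \<longrightarrow> A \<in> herm n \<longrightarrow> \<mu> (\<Phi> A) \<le> \<mu> A)"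

text \<open>The unique decomposition A = A_+ - A_- with A_\<plusminus> psd and A_+ A_- = 0.\<close>
definition jordan_parts :: "complex mat \<Rightarrow> complex mat \<times> complex mat" where
  "jordan_parts A = (THE (P, N). P \<in> carrier_mat (dim_row A) (dim_row A) \<and>
      N \<in> carrier_mat (dim_row A) (dim_row A) \<and> psd P \<and> psd N \<and> A = P - N \<and>
      P * N = 0\<^sub>m (dim_row A) (dim_row A))"

definition pos_part :: "complex mat \<Rightarrow> complex mat" where
  "pos_part A = fst (jordan_parts A)"

definition neg_part :: "complex mat \<Rightarrow> complex mat" where
  "neg_part A = snd (jordan_parts A)"

definition vnorm :: "complex vec \<Rightarrow> real" where
  "vnorm v = sqrt (\<Sum>i<dim_vec v. (cmod (v $ i))\<^sup>2)"

definition op_norm :: "complex mat \<Rightarrow> real" where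
  "op_norm A = Sup {vnorm (A *\<^sub>v v) | v. v \<in> carrier_vec (dim_col A) \<and> vnorm v = 1}"

end

theory Submission
  imports Defs "Jordan_Normal_Form.Schur_Decomposition"
begin

(* If A is neither positive nor negative semidefinite, its largest eigenvalue is
   alpha = ||A_+|| > 0 and its smallest is -beta = -||A_-|| < 0; let u, w be unit eigenvectors
   for them. The norm hypotheses give -beta <= B <= alpha, so P = (B + beta) / (alpha + beta) and
   Q = (alpha - B) / (alpha + beta) are positive semidefinite with P + Q = 1, and
   Phi X = <X u, u> P + <X w, w> Q is a positive unital map with Phi A = alpha P - beta Q = B.
   Hence mu B = mu (Phi A) <= mu A.
   Identifying A_+ and A_- requires the spectral theorem for Hermitian matrices, which is
   obtained by deflating along one eigenvector at a time. *)

section \<open>Adjoints and the complex inner product\<close>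

lemma mat_adjoint_eq:
  fixes A :: "complex mat"
  shows "mat_adjoint A = mat (dim_col A) (dim_row A) (\<lambda>(i,j). cnj (A $$ (j,i)))"
  by (rule eq_matI) (auto simp: mat_adjoint_def mat_of_rows_def)

lemma mat_adjoint_carrier[simp]: "A \<in> carrier_mat n m \<Longrightarrow> mat_adjoint A \<in> carrier_mat m n"
  by (auto simp: mat_adjoint_def)

lemma mat_adjoint_dims[simp]:
  "dim_row (mat_adjoint A) = dim_col A" "dim_col (mat_adjoint A) = dim_row A"
  by (auto simp: mat_adjoint_def)

lemma mat_adjoint_index[simp]:
  fixes A :: "complex mat"
  shows "i < dim_col A \<Longrightarrow> j < dim_row A \<Longrightarrow> mat_adjoint A $$ (i,j) = cnj (A $$ (j,i))"
  by (auto simp: mat_adjoint_eq)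

lemma mat_adjoint_adjoint[simp]: "mat_adjoint (mat_adjoint (A :: complex mat)) = A"
  by (rule eq_matI) (auto simp: mat_adjoint_eq)

lemma mat_adjoint_mult:
  fixes A B :: "complex mat"
  assumes "A \<in> carrier_mat n m" "B \<in> carrier_mat m k"
  shows "mat_adjoint (A * B) = mat_adjoint B * mat_adjoint A"
  using assms by (intro eq_matI) (auto simp: mat_adjoint_eq scalar_prod_def mult_ac)

lemma mat_adjoint_zero[simp]: "mat_adjoint (0\<^sub>m n m :: complex mat) = 0\<^sub>m m n"
  by (rule eq_matI) (auto simp: mat_adjoint_eq)

lemma hermI:
  assumes "A \<in> carrier_mat n n" "\<And>i j. i < n \<Longrightarrow> j < n \<Longrightarrow> A $$ (i,j) = cnj (A $$ (j,i))"
  shows "A \<in> herm n"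
  using assms unfolding herm_def by blast

lemma hermD:
  assumes "A \<in> herm n" "i < n" "j < n"
  shows "A $$ (i,j) = cnj (A $$ (j,i))"
  using assms unfolding herm_def by blast

lemma herm_carrier: "A \<in> herm n \<Longrightarrow> A \<in> carrier_mat n n"
  unfolding herm_def mem_Collect_eq by (rule conjunct1)

lemma herm_iff_mat_adjoint: "A \<in> herm n \<longleftrightarrow> A \<in> carrier_mat n n \<and> mat_adjoint A = A"
proof
  assume A: "A \<in> herm n"
  have C: "A \<in> carrier_mat n n"
    using A by (rule herm_carrier)
  have "mat_adjoint A = A"
  proof (rule eq_matI)
    fix i j assume "i < dim_row A" "j < dim_col A"
    then have ij: "i < n" "j < n"
      using C by auto
    have "mat_adjoint A $$ (i,j) = cnj (A $$ (j,i))"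
      using C ij by simp
    also have "A $$ (j,i) = cnj (A $$ (i,j))"
      using hermD[OF A ij(2,1)] .
    finally show "mat_adjoint A $$ (i,j) = A $$ (i,j)"
      by simp
  qed (use C in auto)
  with C show "A \<in> carrier_mat n n \<and> mat_adjoint A = A" ..
next
  assume A: "A \<in> carrier_mat n n \<and> mat_adjoint A = A"
  show "A \<in> herm n"
  proof (rule hermI)
    fix i j assume ij: "i < n" "j < n"
    have "A $$ (i,j) = mat_adjoint A $$ (i,j)"
      using A by simp
    also have "\<dots> = cnj (A $$ (j,i))"
      by (rule mat_adjoint_index) (use A ij in auto)
    finally show "A $$ (i,j) = cnj (A $$ (j,i))" .
  qed (use A in blast)
qed

lemma herm_uminus:
  assumes A: "A \<in> herm n"
  shows "- A \<in> herm n"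
proof (rule hermI)
  fix i j assume ij: "i < n" "j < n"
  have "A $$ (i,j) = cnj (A $$ (j,i))"
    by (rule hermD[OF A ij])
  then show "(- A) $$ (i,j) = cnj ((- A) $$ (j,i))"
    using herm_carrier[OF A] ij by simp
qed (use herm_carrier[OF A] in simp)

lemma herm_real_lincomb:
  assumes X: "X \<in> herm k" and Y: "Y \<in> herm k"
  shows "complex_of_real a \<cdot>\<^sub>m X + complex_of_real b \<cdot>\<^sub>m Y \<in> herm k"
proof (rule hermI)
  fix i j assume ij: "i < k" "j < k"
  have "X $$ (i,j) = cnj (X $$ (j,i))" "Y $$ (i,j) = cnj (Y $$ (j,i))"
    by (rule hermD[OF X ij], rule hermD[OF Y ij])
  then show "(complex_of_real a \<cdot>\<^sub>m X + complex_of_real b \<cdot>\<^sub>m Y) $$ (i,j) =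
      cnj ((complex_of_real a \<cdot>\<^sub>m X + complex_of_real b \<cdot>\<^sub>m Y) $$ (j,i))"
    using herm_carrier[OF X] herm_carrier[OF Y] ij by simp
qed (use herm_carrier[OF X] herm_carrier[OF Y] in simp)

lemma herm_one: "1\<^sub>m k \<in> herm k"
  by (rule hermI) auto

lemma herm_congruence:
  assumes A: "A \<in> herm n" and F: "F \<in> carrier_mat n m"
  shows "mat_adjoint F * (A * F) \<in> herm m"
proof -
  have A': "A \<in> carrier_mat n n" "mat_adjoint A = A"
    using A herm_iff_mat_adjoint by auto
  have "mat_adjoint (mat_adjoint F * (A * F)) = (mat_adjoint F * mat_adjoint A) * F"
    using A' F by (simp add: mat_adjoint_mult[of _ m n _ m] mat_adjoint_mult[of _ n n _ m])
  also have "\<dots> = mat_adjoint F * (A * F)"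
    using A' F by (simp add: assoc_mult_mat[of _ m n _ n _ m])
  finally have "mat_adjoint (mat_adjoint F * (A * F)) = mat_adjoint F * (A * F)" .
  moreover have "mat_adjoint F * (A * F) \<in> carrier_mat m m"
    using A' F by (meson mat_adjoint_carrier mult_carrier_mat)
  ultimately show ?thesis
    using herm_iff_mat_adjoint by blast
qed

lemma cscalar_prod_mat_adjoint:
  fixes A :: "complex mat"
  assumes A: "A \<in> carrier_mat n m" and x: "x \<in> carrier_vec m" and y: "y \<in> carrier_vec n"
  shows "(A *\<^sub>v x) \<bullet>c y = x \<bullet>c (mat_adjoint A *\<^sub>v y)"
proof -
  have "(A *\<^sub>v x) \<bullet>c y = (\<Sum>i<n. (\<Sum>j<m. A $$ (i,j) * x $ j) * cnj (y $ i))"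
    using A x y by (auto simp: scalar_prod_def row_def atLeast0LessThan)
  also have "\<dots> = (\<Sum>i<n. \<Sum>j<m. A $$ (i,j) * x $ j * cnj (y $ i))"
    by (simp add: sum_distrib_right)
  also have "\<dots> = (\<Sum>j<m. \<Sum>i<n. A $$ (i,j) * x $ j * cnj (y $ i))"
    by (rule sum.swap)
  also have "\<dots> = (\<Sum>j<m. x $ j * cnj (\<Sum>i<n. cnj (A $$ (i,j)) * y $ i))"
    by (simp add: sum_distrib_left mult_ac)
  also have "\<dots> = x \<bullet>c (mat_adjoint A *\<^sub>v y)"
    using A x y by (auto simp: scalar_prod_def row_def atLeast0LessThan mat_adjoint_eq intro!: sum.cong)
  finally show ?thesis .
qed

lemma cscalar_prod_swap:
  fixes x y :: "complex vec"
  shows "x \<in> carrier_vec n \<Longrightarrow> y \<in> carrier_vec n \<Longrightarrow> x \<bullet>c y = cnj (y \<bullet>c x)"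
  by (auto simp: scalar_prod_def mult_ac)

lemma cscalar_prod_smult_left:
  fixes w :: "complex vec"
  shows "dim_vec w = dim_vec v \<Longrightarrow> (k \<cdot>\<^sub>v w) \<bullet>c v = k * (w \<bullet>c v)"
  by (simp add: scalar_prod_def sum_distrib_left mult_ac)

lemma cscalar_prod_smult_right:
  fixes w :: "complex vec"
  shows "dim_vec w = dim_vec v \<Longrightarrow> w \<bullet>c (k \<cdot>\<^sub>v v) = cnj k * (w \<bullet>c v)"
  by (simp add: conjugate_smult_vec)

lemma herm_cscalar_prod:
  assumes "A \<in> herm n" "x \<in> carrier_vec n" "y \<in> carrier_vec n"
  shows "(A *\<^sub>v x) \<bullet>c y = x \<bullet>c (A *\<^sub>v y)"
  using assms cscalar_prod_mat_adjoint[of A n n x y] by (auto simp: herm_iff_mat_adjoint)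

lemma herm_quadratic_form_real:
  assumes A: "A \<in> herm n" and x: "x \<in> carrier_vec n"
  shows "(A *\<^sub>v x) \<bullet>c x = complex_of_real (Re ((A *\<^sub>v x) \<bullet>c x))"
proof -
  have "(A *\<^sub>v x) \<bullet>c x = cnj ((A *\<^sub>v x) \<bullet>c x)"
    using herm_cscalar_prod[OF A x x] cscalar_prod_swap[of x n "A *\<^sub>v x"] x herm_carrier[OF A]
    by simp
  then show ?thesis
    by (simp add: complex_eq_iff)
qed

lemma cscalar_prod_self_real:
  fixes x :: "complex vec"
  shows "x \<bullet>c x = complex_of_real (Re (x \<bullet>c x))" and "0 \<le> Re (x \<bullet>c x)"
  using conjugate_square_ge_0_vec[of x] by (auto simp: less_eq_complex_def complex_eq_iff)

lemma Re_cscalar_prod_self: "Re (x \<bullet>c x) = (\<Sum>i<dim_vec x. (cmod (x $ i))\<^sup>2)"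
  unfolding scalar_prod_def atLeast0LessThan Re_sum
  by (simp add: cmod_power2 sum.distrib flip: power2_eq_square)

lemma vnorm_eq_sqrt_cscalar_prod: "vnorm x = sqrt (Re (x \<bullet>c x))"
  by (simp add: vnorm_def Re_cscalar_prod_self)

section \<open>Unitary matrices and the spectral theorem\<close>

definition unitary :: "nat \<Rightarrow> complex mat \<Rightarrow> bool" where
  "unitary n U \<longleftrightarrow>
     U \<in> carrier_mat n n \<and> mat_adjoint U * U = 1\<^sub>m n \<and> U * mat_adjoint U = 1\<^sub>m n"

lemma unitary_carrier: "unitary n U \<Longrightarrow> U \<in> carrier_mat n n"
  by (simp add: unitary_def)

lemma mat_adjoint_mult_index:
  fixes F M :: "complex mat"
  assumes "F \<in> carrier_mat n k" "M \<in> carrier_mat n l" "i < k" "j < l"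
  shows "(mat_adjoint F * M) $$ (i,j) = col M j \<bullet>c col F i"
  using assms
  by (auto simp: scalar_prod_def mat_adjoint_eq row_def col_def mult_ac intro!: sum.cong)

lemma unitary_col_cscalar_prod:
  assumes U: "unitary n U" and "i < n" "j < n"
  shows "col U j \<bullet>c col U i = (if i = j then 1 else 0)"
proof -
  have "col U j \<bullet>c col U i = (mat_adjoint U * U) $$ (i,j)"
    by (rule mat_adjoint_mult_index[symmetric]) (use assms unitary_carrier[OF U] in auto)
  then show ?thesis
    using assms by (simp add: unitary_def)
qed

lemma unitary_cscalar_prod:
  assumes U: "unitary n U" and x: "x \<in> carrier_vec n" and y: "y \<in> carrier_vec n"
  shows "(U *\<^sub>v x) \<bullet>c (U *\<^sub>v y) = x \<bullet>c y"
proof -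
  have Uc: "U \<in> carrier_mat n n"
    using U by (rule unitary_carrier)
  have "(U *\<^sub>v x) \<bullet>c (U *\<^sub>v y) = x \<bullet>c (mat_adjoint U *\<^sub>v (U *\<^sub>v y))"
    using cscalar_prod_mat_adjoint[OF Uc x] Uc y by simp
  also have "mat_adjoint U *\<^sub>v (U *\<^sub>v y) = (mat_adjoint U * U) *\<^sub>v y"
    using assoc_mult_mat_vec[OF mat_adjoint_carrier[OF Uc] Uc y] by simp
  also have "\<dots> = y"
    using U y by (simp add: unitary_def)
  finally show ?thesis .
qed

lemma unitary_similarity_mult_vec:
  assumes U: "unitary n U" and A: "A \<in> carrier_mat n n" and z: "z \<in> carrier_vec n"
  shows "A *\<^sub>v (U *\<^sub>v z) = U *\<^sub>v ((mat_adjoint U * (A * U)) *\<^sub>v z)"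
proof -
  have Uc: "U \<in> carrier_mat n n"
    using U by (rule unitary_carrier)
  have "U * (mat_adjoint U * (A * U)) = (U * mat_adjoint U) * (A * U)"
    using Uc A by (simp add: assoc_mult_mat[of _ n n _ n _ n])
  also have "\<dots> = A * U"
    using U A Uc by (simp add: unitary_def)
  finally have "U * (mat_adjoint U * (A * U)) = A * U" .
  then show ?thesis
    using Uc A z by (metis assoc_mult_mat_vec mat_adjoint_carrier mult_carrier_mat)
qed

definition orthonormal :: "nat \<Rightarrow> complex vec list \<Rightarrow> bool" where
  "orthonormal n us \<longleftrightarrow> length us = n \<and> set us \<subseteq> carrier_vec n \<and>
     (\<forall>i<n. \<forall>j<n. us ! i \<bullet>c us ! j = (if i = j then 1 else 0))"

lemma col_mat_of_cols_orthonormal: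
  "orthonormal n us \<Longrightarrow> j < n \<Longrightarrow> col (mat_of_cols n us) j = us ! j"
  unfolding orthonormal_def by (metis col_mat_of_cols nth_mem subsetD)

lemma unitary_mat_of_cols:
  assumes "orthonormal n us"
  shows "unitary n (mat_of_cols n us)"
proof -
  define U where "U = mat_of_cols n us"
  have len: "length us = n"
    and on: "\<And>i j. i < n \<Longrightarrow> j < n \<Longrightarrow> us ! i \<bullet>c us ! j = (if i = j then 1 else 0)"
    using assms unfolding orthonormal_def by auto
  have U: "U \<in> carrier_mat n n"
    unfolding U_def using len by auto
  have "mat_adjoint U * U = 1\<^sub>m n"
  proof (rule eq_matI)
    fix i j assume "i < dim_row (1\<^sub>m n :: complex mat)" "j < dim_col (1\<^sub>m n :: complex mat)"
    then have ij: "i < n" "j < n"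
      by auto
    have "(mat_adjoint U * U) $$ (i,j) = col U j \<bullet>c col U i"
      using mat_adjoint_mult_index[OF U U ij] .
    also have "\<dots> = us ! j \<bullet>c us ! i"
      using ij assms unfolding U_def by (simp add: col_mat_of_cols_orthonormal)
    also have "\<dots> = 1\<^sub>m n $$ (i,j)"
      using on[of j i] ij by auto
    finally show "(mat_adjoint U * U) $$ (i,j) = 1\<^sub>m n $$ (i,j)" .
  qed (use U in auto)
  moreover from this have "U * mat_adjoint U = 1\<^sub>m n"
    using mat_mult_left_right_inverse[OF mat_adjoint_carrier[OF U] U] by blast
  ultimately show ?thesis
    using U unfolding U_def unitary_def by blast
qed

lemma orthonormal_map_unitary:
  assumes F: "unitary n F" and zs: "orthonormal n zs"
  shows "orthonormal n (map ((*\<^sub>v) F) zs)"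
  using zs unitary_carrier[OF F] unitary_cscalar_prod[OF F] unfolding orthonormal_def
  by (auto simp: subset_iff)

lemma unit_vec_Suc_0: "unit_vec (Suc m) 0 = vCons 1 (0\<^sub>v m)"
  by (rule eq_vecI) (auto simp: vec_index_vCons)

lemma smult_vCons: "k \<cdot>\<^sub>v vCons a y = vCons (k * a) (k \<cdot>\<^sub>v y)"
  by (rule eq_vecI) (auto simp: vec_index_vCons)

lemma orthonormal_vCons:
  assumes "orthonormal m ys"
  shows "orthonormal (Suc m) (unit_vec (Suc m) 0 # map (vCons 0) ys)"
proof -
  have len: "length ys = m" and car: "\<And>j. j < m \<Longrightarrow> ys ! j \<in> carrier_vec m"
    and on: "\<And>i j. i < m \<Longrightarrow> j < m \<Longrightarrow> ys ! i \<bullet>c ys ! j = (if i = j then 1 else 0)"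
    using assms unfolding orthonormal_def by auto
  show ?thesis
    unfolding orthonormal_def unit_vec_Suc_0
  proof (intro conjI allI impI)
    fix i j assume "i < Suc m" "j < Suc m"
    then show "(vCons 1 (0\<^sub>v m) # map (vCons 0) ys) ! i \<bullet>c
        (vCons 1 (0\<^sub>v m) # map (vCons 0) ys) ! j = (if i = j then 1 else 0)"
      using len car on by (cases i; cases j) auto
  qed (use assms in \<open>auto simp: orthonormal_def\<close>)
qed

definition vec_normalize :: "complex vec \<Rightarrow> complex vec" where
  "vec_normalize w = complex_of_real (1 / sqrt (Re (w \<bullet>c w))) \<cdot>\<^sub>v w"

lemma vec_normalize_carrier[simp]: "w \<in> carrier_vec n \<Longrightarrow> vec_normalize w \<in> carrier_vec n"
  by (simp add: vec_normalize_def)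

lemma vec_normalize_cscalar_prod:
  assumes "dim_vec w = dim_vec w'"
  shows "vec_normalize w \<bullet>c vec_normalize w' =
    complex_of_real (1 / sqrt (Re (w \<bullet>c w)) * (1 / sqrt (Re (w' \<bullet>c w')))) * (w \<bullet>c w')"
  using assms unfolding vec_normalize_def
  by (simp add: cscalar_prod_smult_left cscalar_prod_smult_right)

lemma vec_normalize_unit:
  assumes w: "w \<in> carrier_vec n" and w0: "w \<noteq> 0\<^sub>v n"
  shows "vec_normalize w \<bullet>c vec_normalize w = 1"
proof -
  have pos: "Re (w \<bullet>c w) > 0"
    using conjugate_square_greater_0_vec[OF w] w0 by (simp add: less_complex_def)
  have Im0: "Im (w \<bullet>c w) = 0"
    by (metis Im_complex_of_real cscalar_prod_self_real(1))
  show ?thesis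
    unfolding vec_normalize_cscalar_prod[OF refl] using pos Im0
    by (simp add: complex_eq_iff)
qed

lemma vec_normalize_of_unit: "w \<bullet>c w = 1 \<Longrightarrow> vec_normalize w = w"
  by (simp add: vec_normalize_def)

lemma orthonormal_map_vec_normalize:
  assumes ws: "set ws \<subseteq> carrier_vec n" "corthogonal ws" "length ws = n"
  shows "orthonormal n (map vec_normalize ws)"
  unfolding orthonormal_def
proof (intro conjI allI impI)
  fix i j assume i: "i < n" and j: "j < n"
  have wi: "ws ! i \<in> carrier_vec n" "ws ! j \<in> carrier_vec n"
    using ws i j by auto
  have o: "ws ! i \<bullet>c ws ! j = 0 \<longleftrightarrow> i \<noteq> j"
    using corthogonalD[OF ws(2)] i j ws(3) by auto
  show "map vec_normalize ws ! i \<bullet>c map vec_normalize ws ! j = (if i = j then 1 else 0)"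
  proof (cases "i = j")
    case True
    with o wi have "ws ! i \<noteq> 0\<^sub>v n"
      by auto
    with True show ?thesis
      using vec_normalize_unit[OF wi(1)] i ws(3) by simp
  next
    case False
    then show ?thesis
      using vec_normalize_cscalar_prod[of "ws ! i" "ws ! j"] wi o i j ws(3) by simp
  qed
qed (use ws in auto)

lemma orthonormal_extension:
  assumes v: "v \<in> carrier_vec n" and vv: "v \<bullet>c v = 1"
  shows "\<exists>fs. orthonormal n fs \<and> fs ! 0 = v"
proof -
  have v0: "v \<noteq> 0\<^sub>v n"
    using vv by auto
  then have n: "0 < n"
    using v by (metis carrier_vecD gr0I vec_of_dim_0)
  interpret cof_vec_space n "TYPE(complex)" .
  define b where "b = basis_completion v"
  from basis_completion[OF v v0, folded b_def]
  have dist_b: "distinct b" and indep: "\<not> lin_dep (set b)" and b: "set b \<subseteq> carrier_vec n"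
    and hdb: "hd b = v" and len_b: "length b = n"
    by auto
  from hdb len_b n obtain vs where bv: "b = v # vs"
    by (cases b) auto
  define ws where "ws = gram_schmidt n b"
  from gram_schmidt_result[OF b dist_b indep refl, folded ws_def]
  have ws: "set ws \<subseteq> carrier_vec n" "corthogonal ws" "length ws = n"
    by (auto simp: len_b)
  have ws0: "ws ! 0 = v"
    using gram_schmidt_hd[OF v, of vs] ws(3) n unfolding ws_def bv
    by (cases "gram_schmidt n (v # vs)") auto
  define fs where "fs = map vec_normalize ws"
  have "orthonormal n fs"
    unfolding fs_def using ws by (rule orthonormal_map_vec_normalize)
  moreover have "fs ! 0 = v"
    using ws0 ws(3) n vv by (simp add: fs_def vec_normalize_of_unit)
  ultimately show ?thesis
    by blast
qed

lemma herm_unit_eigenvector: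
  assumes A: "A \<in> herm n" and n: "0 < n"
  shows "\<exists>e v. v \<in> carrier_vec n \<and> v \<bullet>c v = 1 \<and> A *\<^sub>v v = complex_of_real e \<cdot>\<^sub>v v"
proof -
  have Ac: "A \<in> carrier_mat n n"
    using A by (rule herm_carrier)
  obtain as where cp: "char_poly A = (\<Prod>a\<leftarrow>as. [:- a, 1:])" and len: "length as = n"
    using char_poly_factorized[OF Ac] by auto
  then obtain e as' where as: "as = e # as'"
    using n by (cases as) auto
  have "eigenvalue A e"
    unfolding eigenvalue_root_char_poly[OF Ac] cp as by simp
  then obtain v where "eigenvector A v e"
    unfolding eigenvalue_def by auto
  then have v: "v \<in> carrier_vec n" and v0: "v \<noteq> 0\<^sub>v n" and Av: "A *\<^sub>v v = e \<cdot>\<^sub>v v"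
    using Ac unfolding eigenvector_def by auto
  have "e * (v \<bullet>c v) = (A *\<^sub>v v) \<bullet>c v"
    using Av v by (simp add: cscalar_prod_smult_left)
  also have "\<dots> = v \<bullet>c (A *\<^sub>v v)"
    by (rule herm_cscalar_prod[OF A v v])
  also have "\<dots> = cnj e * (v \<bullet>c v)"
    using Av v by (simp add: cscalar_prod_smult_right)
  finally have "e = cnj e"
    using v v0 by simp
  then have eR: "e = complex_of_real (Re e)"
    by (simp add: complex_eq_iff)
  have "A *\<^sub>v vec_normalize v = e \<cdot>\<^sub>v vec_normalize v"
    unfolding vec_normalize_def using mult_mat_vec[OF Ac v] Av
    by (simp add: smult_smult_assoc mult.commute)
  then show ?thesis
    using vec_normalize_unit[OF v v0] v eR by (metis vec_normalize_carrier)
qed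

definition lower_block :: "'a mat \<Rightarrow> 'a mat" where
  "lower_block M = mat (dim_row M - 1) (dim_col M - 1) (\<lambda>(i,j). M $$ (Suc i, Suc j))"

lemma lower_block_herm:
  assumes M: "M \<in> herm (Suc m)"
  shows "lower_block M \<in> herm m"
proof (rule hermI)
  fix i j assume "i < m" "j < m"
  then show "lower_block M $$ (i,j) = cnj (lower_block M $$ (j,i))"
    using hermD[OF M, of "Suc i" "Suc j"] herm_carrier[OF M] by (simp add: lower_block_def)
qed (use herm_carrier[OF M] in \<open>simp add: lower_block_def\<close>)

lemma mult_vCons_lower_block:
  fixes M :: "'a :: comm_ring mat"
  assumes M: "M \<in> carrier_mat (Suc m) (Suc m)" and row0: "\<And>j. j < m \<Longrightarrow> M $$ (0, Suc j) = 0"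
    and y: "y \<in> carrier_vec m"
  shows "M *\<^sub>v vCons 0 y = vCons 0 (lower_block M *\<^sub>v y)"
proof (rule eq_vecI)
  fix i assume "i < dim_vec (vCons 0 (lower_block M *\<^sub>v y))"
  then have i: "i < Suc m"
    using M by (simp add: lower_block_def)
  have "(M *\<^sub>v vCons 0 y) $ i = (\<Sum>k<Suc m. M $$ (i,k) * vCons 0 y $ k)"
    using M y i by (simp add: scalar_prod_def row_def atLeast0LessThan)
  also have "\<dots> = (\<Sum>k<m. M $$ (i, Suc k) * y $ k)"
    by (simp add: sum.lessThan_Suc_shift del: sum.lessThan_Suc)
  also have "\<dots> = vCons 0 (lower_block M *\<^sub>v y) $ i"
    using M y i row0
    by (cases i) (auto simp: lower_block_def scalar_prod_def row_def atLeast0LessThan)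
  finally show "(M *\<^sub>v vCons 0 y) $ i = vCons 0 (lower_block M *\<^sub>v y) $ i" .
qed (use M in \<open>simp add: lower_block_def\<close>)

lemma unitary_deflation:
  assumes A: "A \<in> herm n" and F: "unitary n F"
    and Av: "A *\<^sub>v col F 0 = complex_of_real e \<cdot>\<^sub>v col F 0" and j: "0 < j" "j < n"
  shows "(mat_adjoint F * (A * F)) $$ (0, j) = 0"
proof -
  have Ac: "A \<in> carrier_mat n n" and Fc: "F \<in> carrier_mat n n"
    using A F by (auto simp: herm_carrier unitary_carrier)
  have "(mat_adjoint F * (A * F)) $$ (0, j) = col (A * F) j \<bullet>c col F 0"
    by (rule mat_adjoint_mult_index[OF Fc]) (use Ac Fc j in auto)
  also have "col (A * F) j = A *\<^sub>v col F j"
    using Ac Fc j by (simp add: mult_mat_vec_def)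
  also have "(A *\<^sub>v col F j) \<bullet>c col F 0 = col F j \<bullet>c (A *\<^sub>v col F 0)"
    using Fc j by (intro herm_cscalar_prod[OF A]) auto
  also have "\<dots> = cnj (complex_of_real e) * (col F j \<bullet>c col F 0)"
    unfolding Av by (rule cscalar_prod_smult_right) simp
  also have "col F j \<bullet>c col F 0 = 0"
    using unitary_col_cscalar_prod[OF F, of 0 j] j by simp
  finally show ?thesis
    by simp
qed

lemma orthonormal_eigenbasis_of_deflation:
  assumes A: "A \<in> herm (Suc m)" and F: "unitary (Suc m) F"
    and Av: "A *\<^sub>v col F 0 = complex_of_real e \<cdot>\<^sub>v col F 0"
    and ys: "orthonormal m ys"
    and ev: "\<And>j. j < m \<Longrightarrow>
      lower_block (mat_adjoint F * (A * F)) *\<^sub>v ys ! j = complex_of_real (d j) \<cdot>\<^sub>v ys ! j"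
  shows "\<exists>us d'. orthonormal (Suc m) us \<and>
    (\<forall>j<Suc m. A *\<^sub>v us ! j = complex_of_real (d' j) \<cdot>\<^sub>v us ! j)"
proof -
  define A' where "A' = mat_adjoint F * (A * F)"
  have Ac: "A \<in> carrier_mat (Suc m) (Suc m)" and Fc: "F \<in> carrier_mat (Suc m) (Suc m)"
    using A F by (auto simp: herm_carrier unitary_carrier)
  have A'c: "A' \<in> carrier_mat (Suc m) (Suc m)"
    unfolding A'_def using herm_congruence[OF A Fc] by (rule herm_carrier)
  have A'_vCons: "A' *\<^sub>v vCons 0 y = vCons 0 (lower_block A' *\<^sub>v y)" if "y \<in> carrier_vec m" for y
    using mult_vCons_lower_block[OF A'c _ that] unitary_deflation[OF A F Av] unfolding A'_def by simp
  define us where "us = map ((*\<^sub>v) F) (unit_vec (Suc m) 0 # map (vCons 0) ys)"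
  define d' where "d' j = (if j = 0 then e else d (j - 1))" for j
  have "A *\<^sub>v us ! j = complex_of_real (d' j) \<cdot>\<^sub>v us ! j" if j: "j < Suc m" for j
  proof (cases j)
    case 0
    have "F *\<^sub>v unit_vec (Suc m) 0 = col F 0"
      using Fc by (metis col_mult2 col_one one_carrier_mat right_mult_one_mat zero_less_Suc)
    then show ?thesis
      using 0 Av by (simp add: us_def d'_def)
  next
    case (Suc j')
    have y: "ys ! j' \<in> carrier_vec m" and j': "j' < m" and len: "length ys = m"
      using ys j Suc unfolding orthonormal_def by auto
    have "A *\<^sub>v (F *\<^sub>v vCons 0 (ys ! j')) = F *\<^sub>v (A' *\<^sub>v vCons 0 (ys ! j'))"
      unfolding A'_def using y by (intro unitary_similarity_mult_vec[OF F Ac]) simp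
    also have "\<dots> = F *\<^sub>v (complex_of_real (d j') \<cdot>\<^sub>v vCons 0 (ys ! j'))"
      using A'_vCons[OF y] ev[OF j'] unfolding A'_def by (simp add: smult_vCons)
    also have "\<dots> = complex_of_real (d j') \<cdot>\<^sub>v (F *\<^sub>v vCons 0 (ys ! j'))"
      using Fc y by (simp add: mult_mat_vec)
    finally show ?thesis
      using Suc j' len by (simp add: us_def d'_def)
  qed
  moreover have "orthonormal (Suc m) us"
    unfolding us_def by (intro orthonormal_map_unitary[OF F] orthonormal_vCons[OF ys])
  ultimately show ?thesis
    by blast
qed

theorem herm_orthonormal_eigenbasis:
  "A \<in> herm n \<Longrightarrow>
    \<exists>us d. orthonormal n us \<and> (\<forall>j<n. A *\<^sub>v us ! j = complex_of_real (d j) \<cdot>\<^sub>v us ! j)"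
proof (induction n arbitrary: A)
  case 0
  show ?case
    by (intro exI[of _ "[]"]) (auto simp: orthonormal_def)
next
  case (Suc m A)
  obtain e v where v: "v \<in> carrier_vec (Suc m)" "v \<bullet>c v = 1"
    and Av: "A *\<^sub>v v = complex_of_real e \<cdot>\<^sub>v v"
    using herm_unit_eigenvector[OF Suc.prems] by blast
  obtain fs where fs: "orthonormal (Suc m) fs" "fs ! 0 = v"
    using orthonormal_extension[OF v] by blast
  define F where "F = mat_of_cols (Suc m) fs"
  have F: "unitary (Suc m) F"
    unfolding F_def using fs(1) by (rule unitary_mat_of_cols)
  have "col F 0 = v"
    unfolding F_def using col_mat_of_cols_orthonormal[OF fs(1)] fs(2) by simp
  moreover obtain ys d where "orthonormal m ys"
    "\<And>j. j < m \<Longrightarrow>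
      lower_block (mat_adjoint F * (A * F)) *\<^sub>v ys ! j = complex_of_real (d j) \<cdot>\<^sub>v ys ! j"
    using Suc.IH[OF lower_block_herm[OF herm_congruence[OF Suc.prems unitary_carrier[OF F]]]]
    by blast
  ultimately show ?case
    using orthonormal_eigenbasis_of_deflation[OF Suc.prems F] Av by metis
qed

definition real_diag_mat :: "nat \<Rightarrow> (nat \<Rightarrow> real) \<Rightarrow> complex mat" where
  "real_diag_mat n d = mat n n (\<lambda>(i,j). if i = j then complex_of_real (d i) else 0)"

definition spectral_mat :: "nat \<Rightarrow> complex mat \<Rightarrow> (nat \<Rightarrow> real) \<Rightarrow> complex mat" where
  "spectral_mat n U d = U * (real_diag_mat n d * mat_adjoint U)"

lemma real_diag_mat_carrier[simp]: "real_diag_mat n d \<in> carrier_mat n n"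
  by (simp add: real_diag_mat_def)

lemma real_diag_mat_dims[simp]:
  "dim_row (real_diag_mat n d) = n" "dim_col (real_diag_mat n d) = n"
  by (simp_all add: real_diag_mat_def)

lemma mult_real_diag_mat:
  fixes U :: "complex mat"
  assumes U: "U \<in> carrier_mat k n"
  shows "U * real_diag_mat n d = mat k n (\<lambda>(i,j). U $$ (i,j) * complex_of_real (d j))"
proof (rule eq_matI)
  fix i j assume "i < dim_row (mat k n (\<lambda>(i,j). U $$ (i,j) * complex_of_real (d j)))"
    "j < dim_col (mat k n (\<lambda>(i,j). U $$ (i,j) * complex_of_real (d j)))"
  then have i: "i < k" and j: "j < n"
    by auto
  have "col (real_diag_mat n d) j = complex_of_real (d j) \<cdot>\<^sub>v unit_vec n j"
    using j by (auto simp: real_diag_mat_def intro!: eq_vecI)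
  then have "(U * real_diag_mat n d) $$ (i,j) = row U i \<bullet> (complex_of_real (d j) \<cdot>\<^sub>v unit_vec n j)"
    using U i j by simp
  also have "\<dots> = complex_of_real (d j) * U $$ (i,j)"
    using U i j by (simp add: scalar_prod_right_unit)
  finally show "(U * real_diag_mat n d) $$ (i,j) =
      mat k n (\<lambda>(i,j). U $$ (i,j) * complex_of_real (d j)) $$ (i,j)"
    using i j by (simp add: mult.commute)
qed (use U in auto)

lemma real_diag_mat_mult_real_diag_mat:
  "real_diag_mat n d1 * real_diag_mat n d2 = real_diag_mat n (\<lambda>i. d1 i * d2 i)"
  by (subst mult_real_diag_mat[OF real_diag_mat_carrier])
    (rule eq_matI, auto simp: real_diag_mat_def)

lemma real_diag_mat_mult_vec:
  assumes c: "c \<in> carrier_vec n"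
  shows "real_diag_mat n d *\<^sub>v c = vec n (\<lambda>i. complex_of_real (d i) * c $ i)"
proof (rule eq_vecI)
  fix i assume "i < dim_vec (vec n (\<lambda>i. complex_of_real (d i) * c $ i))"
  then have i: "i < n"
    by simp
  have "row (real_diag_mat n d) i = complex_of_real (d i) \<cdot>\<^sub>v unit_vec n i"
    using i by (auto simp: real_diag_mat_def intro!: eq_vecI)
  then show "(real_diag_mat n d *\<^sub>v c) $ i = vec n (\<lambda>i. complex_of_real (d i) * c $ i) $ i"
    using c i by (simp add: scalar_prod_left_unit)
qed simp

lemma real_diag_mat_minus:
  "real_diag_mat n d1 - real_diag_mat n d2 = real_diag_mat n (\<lambda>i. d1 i - d2 i)"
  by (rule eq_matI) (auto simp: real_diag_mat_def)

lemma real_diag_mat_zero: "real_diag_mat n (\<lambda>i. 0) = 0\<^sub>m n n"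
  by (rule eq_matI) (auto simp: real_diag_mat_def)

lemma mat_adjoint_real_diag_mat[simp]: "mat_adjoint (real_diag_mat n d) = real_diag_mat n d"
  by (rule eq_matI) (auto simp: real_diag_mat_def mat_adjoint_eq)

locale unitary_frame =
  fixes n :: nat and U :: "complex mat"
  assumes unitary: "unitary n U"
begin

lemma U_carrier[simp]: "U \<in> carrier_mat n n"
  using unitary by (rule unitary_carrier)

lemma U_dims[simp]: "dim_row U = n" "dim_col U = n"
  using carrier_matD[OF U_carrier] by auto

lemma adjoint_carrier[simp]: "mat_adjoint U \<in> carrier_mat n n"
  using U_carrier by (rule mat_adjoint_carrier)

lemma adjoint_mult_U: "mat_adjoint U * U = 1\<^sub>m n"
  using unitary by (simp add: unitary_def)

lemma U_mult_adjoint: "U * mat_adjoint U = 1\<^sub>m n"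
  using unitary by (simp add: unitary_def)

lemma col_carrier[simp]: "col U j \<in> carrier_vec n"
  using U_carrier by (metis carrier_matD(1) carrier_vec_dim_vec col_dim)

lemma col_unit: "j < n \<Longrightarrow> col U j \<bullet>c col U j = 1"
  using unitary_col_cscalar_prod[OF unitary] by simp

lemma spectral_mat_carrier[simp]: "spectral_mat n U d \<in> carrier_mat n n"
  unfolding spectral_mat_def using U_carrier
  by (meson mat_adjoint_carrier mult_carrier_mat real_diag_mat_carrier)

lemma spectral_mat_dims[simp]: "dim_row (spectral_mat n U d) = n" "dim_col (spectral_mat n U d) = n"
  using carrier_matD[OF spectral_mat_carrier] by auto

lemma spectral_mat_herm: "spectral_mat n U d \<in> herm n"
proof -
  have "real_diag_mat n d \<in> herm n"
    using herm_iff_mat_adjoint by simp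
  then have "mat_adjoint (mat_adjoint U) * (real_diag_mat n d * mat_adjoint U) \<in> herm n"
    using U_carrier by (intro herm_congruence mat_adjoint_carrier)
  then show ?thesis
    by (simp add: spectral_mat_def)
qed

lemma spectral_mat_mult_U: "spectral_mat n U d * U = U * real_diag_mat n d"
proof -
  have "spectral_mat n U d * U = U * ((real_diag_mat n d * mat_adjoint U) * U)"
    unfolding spectral_mat_def
    by (rule assoc_mult_mat[OF U_carrier mult_carrier_mat[OF real_diag_mat_carrier adjoint_carrier] U_carrier])
  also have "(real_diag_mat n d * mat_adjoint U) * U = real_diag_mat n d * (mat_adjoint U * U)"
    by (rule assoc_mult_mat[of _ n n _ n _ n]) auto
  finally show ?thesis
    by (simp add: adjoint_mult_U)
qed

lemma spectral_mat_col:
  assumes j: "j < n"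
  shows "spectral_mat n U d *\<^sub>v col U j = complex_of_real (d j) \<cdot>\<^sub>v col U j"
proof -
  have "spectral_mat n U d *\<^sub>v col U j = col (spectral_mat n U d * U) j"
    using col_mult2[OF spectral_mat_carrier U_carrier j] by simp
  also have "\<dots> = col (U * real_diag_mat n d) j"
    by (simp only: spectral_mat_mult_U)
  also have "\<dots> = complex_of_real (d j) \<cdot>\<^sub>v col U j"
    unfolding mult_real_diag_mat[OF U_carrier] using j by (auto intro!: eq_vecI)
  finally show ?thesis .
qed

lemma eq_spectral_mat_if_eigen_cols:
  assumes M: "M \<in> carrier_mat n n"
    and ev: "\<And>j. j < n \<Longrightarrow> M *\<^sub>v col U j = complex_of_real (d j) \<cdot>\<^sub>v col U j"
  shows "M = spectral_mat n U d"
proof -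
  have MU: "M * U = U * real_diag_mat n d"
  proof (rule eq_matI)
    fix i j assume "i < dim_row (U * real_diag_mat n d)" "j < dim_col (U * real_diag_mat n d)"
    then have i: "i < n" and j: "j < n"
      by auto
    have "(M * U) $$ (i,j) = (M *\<^sub>v col U j) $ i"
      using M i j by simp
    also have "\<dots> = (U * real_diag_mat n d) $$ (i,j)"
      unfolding ev[OF j] mult_real_diag_mat[OF U_carrier] using i j by simp
    finally show "(M * U) $$ (i,j) = (U * real_diag_mat n d) $$ (i,j)" .
  qed (use M in auto)
  have "M = M * (U * mat_adjoint U)"
    using M by (simp add: U_mult_adjoint)
  also have "\<dots> = (M * U) * mat_adjoint U"
    using M by (simp add: assoc_mult_mat[of _ n n _ n _ n])
  also have "\<dots> = spectral_mat n U d"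
    unfolding MU spectral_mat_def by (simp add: assoc_mult_mat[of _ n n _ n _ n])
  finally show ?thesis .
qed

end

theorem herm_spectral_decomposition:
  assumes A: "A \<in> herm n"
  shows "\<exists>U d. unitary n U \<and> A = spectral_mat n U d"
proof -
  obtain us d where us: "orthonormal n us"
    and ev: "\<And>j. j < n \<Longrightarrow> A *\<^sub>v us ! j = complex_of_real (d j) \<cdot>\<^sub>v us ! j"
    using herm_orthonormal_eigenbasis[OF A] by blast
  define U where "U = mat_of_cols n us"
  have U: "unitary n U"
    unfolding U_def using us by (rule unitary_mat_of_cols)
  interpret unitary_frame n U
    using U by unfold_locales
  have "A = spectral_mat n U d"
    using col_mat_of_cols_orthonormal[OF us] ev herm_carrier[OF A] unfolding U_def[symmetric]
    by (intro eq_spectral_mat_if_eigen_cols) auto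
  with U show ?thesis
    by blast
qed

context unitary_frame
begin

lemma mult_square_carrier[simp]:
  "A \<in> carrier_mat n n \<Longrightarrow> B \<in> carrier_mat n n \<Longrightarrow> A * B \<in> carrier_mat n n"
  by (rule mult_carrier_mat)

lemma mult_vec_square_carrier[simp]:
  "A \<in> carrier_mat n n \<Longrightarrow> v \<in> carrier_vec n \<Longrightarrow> A *\<^sub>v v \<in> carrier_vec n"
  by (rule mult_mat_vec_carrier)

lemma spectral_mat_minus:
  "spectral_mat n U d1 - spectral_mat n U d2 = spectral_mat n U (\<lambda>i. d1 i - d2 i)"
proof -
  have "spectral_mat n U d1 - spectral_mat n U d2 =
      U * (real_diag_mat n d1 * mat_adjoint U - real_diag_mat n d2 * mat_adjoint U)"
    unfolding spectral_mat_def by (rule mult_minus_distrib_mat[symmetric, of _ n n]) auto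
  also have "real_diag_mat n d1 * mat_adjoint U - real_diag_mat n d2 * mat_adjoint U =
      (real_diag_mat n d1 - real_diag_mat n d2) * mat_adjoint U"
    by (rule minus_mult_distrib_mat[symmetric, of _ n n]) auto
  finally show ?thesis
    unfolding real_diag_mat_minus spectral_mat_def .
qed

lemma spectral_mat_mult:
  "spectral_mat n U d1 * spectral_mat n U d2 = spectral_mat n U (\<lambda>i. d1 i * d2 i)"
proof -
  have "spectral_mat n U d1 * spectral_mat n U d2 =
      U * (real_diag_mat n d1 * ((mat_adjoint U * U) * (real_diag_mat n d2 * mat_adjoint U)))"
    unfolding spectral_mat_def by (simp add: assoc_mult_mat[of _ n n _ n _ n])
  also have "\<dots> = U * ((real_diag_mat n d1 * real_diag_mat n d2) * mat_adjoint U)"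
    unfolding adjoint_mult_U by (simp add: assoc_mult_mat[of _ n n _ n _ n])
  finally show ?thesis
    unfolding real_diag_mat_mult_real_diag_mat spectral_mat_def .
qed

lemma spectral_mat_zero: "spectral_mat n U (\<lambda>i. 0) = 0\<^sub>m n n"
  unfolding spectral_mat_def real_diag_mat_zero by simp

lemma spectral_mat_uminus: "- spectral_mat n U d = spectral_mat n U (\<lambda>i. - d i)"
proof -
  have "spectral_mat n U (\<lambda>i. - d i) = spectral_mat n U (\<lambda>i. 0) - spectral_mat n U d"
    using spectral_mat_minus[of "\<lambda>i. 0" d] by simp
  also have "\<dots> = - spectral_mat n U d"
    unfolding spectral_mat_zero by (rule eq_matI) auto
  finally show ?thesis
    by simp
qed

lemma spectral_mat_mult_vec:
  assumes v: "v \<in> carrier_vec n"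
  shows "spectral_mat n U d *\<^sub>v v = U *\<^sub>v (real_diag_mat n d *\<^sub>v (mat_adjoint U *\<^sub>v v))"
  unfolding spectral_mat_def
  using assoc_mult_mat_vec[OF U_carrier mult_square_carrier[OF real_diag_mat_carrier adjoint_carrier] v]
    assoc_mult_mat_vec[OF real_diag_mat_carrier adjoint_carrier v] by simp

lemma Re_cscalar_prod_self_coords:
  assumes v: "v \<in> carrier_vec n"
  shows "Re (v \<bullet>c v) = (\<Sum>i<n. (cmod ((mat_adjoint U *\<^sub>v v) $ i))\<^sup>2)"
proof -
  let ?c = "mat_adjoint U *\<^sub>v v"
  have c: "?c \<in> carrier_vec n"
    using v by simp
  have "U *\<^sub>v ?c = v"
    using assoc_mult_mat_vec[OF U_carrier adjoint_carrier v] v by (simp add: U_mult_adjoint)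
  then have "v \<bullet>c v = ?c \<bullet>c ?c"
    using unitary_cscalar_prod[OF unitary c c] by simp
  then show ?thesis
    using c by (simp add: Re_cscalar_prod_self)
qed

lemma spectral_mat_quadratic_form:
  assumes v: "v \<in> carrier_vec n"
  shows "Re ((spectral_mat n U d *\<^sub>v v) \<bullet>c v) = (\<Sum>i<n. d i * (cmod ((mat_adjoint U *\<^sub>v v) $ i))\<^sup>2)"
proof -
  let ?c = "mat_adjoint U *\<^sub>v v"
  have c: "?c \<in> carrier_vec n"
    using v by simp
  have "(spectral_mat n U d *\<^sub>v v) \<bullet>c v = (real_diag_mat n d *\<^sub>v ?c) \<bullet>c ?c"
    unfolding spectral_mat_mult_vec[OF v] using c v by (intro cscalar_prod_mat_adjoint) auto
  also have "\<dots> = (\<Sum>i<n. complex_of_real (d i) * (?c $ i * cnj (?c $ i)))"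
    using c by (simp add: real_diag_mat_mult_vec scalar_prod_def atLeast0LessThan mult.assoc)
  finally show ?thesis
    by (simp add: Re_sum cmod_power2 flip: power2_eq_square)
qed

lemma spectral_mat_norm_sq:
  assumes v: "v \<in> carrier_vec n"
  shows "Re ((spectral_mat n U d *\<^sub>v v) \<bullet>c (spectral_mat n U d *\<^sub>v v)) =
    (\<Sum>i<n. (d i)\<^sup>2 * (cmod ((mat_adjoint U *\<^sub>v v) $ i))\<^sup>2)"
proof -
  let ?c = "mat_adjoint U *\<^sub>v v"
  have w: "real_diag_mat n d *\<^sub>v ?c \<in> carrier_vec n"
    using v by simp
  have "(spectral_mat n U d *\<^sub>v v) \<bullet>c (spectral_mat n U d *\<^sub>v v) =
      (real_diag_mat n d *\<^sub>v ?c) \<bullet>c (real_diag_mat n d *\<^sub>v ?c)"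
    unfolding spectral_mat_mult_vec[OF v] by (rule unitary_cscalar_prod[OF unitary w w])
  then show ?thesis
    using v by (simp add: Re_cscalar_prod_self real_diag_mat_mult_vec norm_mult power_mult_distrib)
qed

lemma spectral_mat_psd:
  assumes "\<And>i. i < n \<Longrightarrow> 0 \<le> d i"
  shows "psd (spectral_mat n U d)"
  unfolding psd_def using spectral_mat_herm assms
  by (auto simp: spectral_mat_quadratic_form intro!: sum_nonneg)

end

section \<open>Positive and negative parts\<close>

lemma psd_mat_adjoint: "psd P \<Longrightarrow> P \<in> carrier_mat n n \<Longrightarrow> mat_adjoint P = P"
  unfolding psd_def by (auto simp: herm_iff_mat_adjoint)

lemma psd_quadratic_form_nonneg:
  "psd P \<Longrightarrow> P \<in> carrier_mat n n \<Longrightarrow> v \<in> carrier_vec n \<Longrightarrow> 0 \<le> Re ((P *\<^sub>v v) \<bullet>c v)"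
  unfolding psd_def by auto

lemma eq_zero_if_Re_cscalar_prod_self_nonpos:
  fixes v :: "complex vec"
  assumes "v \<in> carrier_vec n" "Re (v \<bullet>c v) \<le> 0"
  shows "v = 0\<^sub>v n"
proof -
  have "Re (v \<bullet>c v) = 0"
    using assms(2) cscalar_prod_self_real(2)[of v] by linarith
  then have "v \<bullet>c v = 0"
    using cscalar_prod_self_real(1)[of v] by simp
  then show ?thesis
    using assms(1) by simp
qed

lemma self_adjoint_norm_sq_eigen:
  fixes M :: "complex mat"
  assumes M: "M \<in> carrier_mat n n" "mat_adjoint M = M" and x: "x \<in> carrier_vec n"
    and ev: "M *\<^sub>v (M *\<^sub>v x) = complex_of_real c \<cdot>\<^sub>v (M *\<^sub>v x)"
  shows "Re ((M *\<^sub>v x) \<bullet>c (M *\<^sub>v x)) = c * Re ((M *\<^sub>v x) \<bullet>c x)"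
proof -
  have Mx: "M *\<^sub>v x \<in> carrier_vec n"
    using M x by simp
  have "(M *\<^sub>v (M *\<^sub>v x)) \<bullet>c x = (M *\<^sub>v x) \<bullet>c (M *\<^sub>v x)"
    using cscalar_prod_mat_adjoint[OF M(1) Mx x] M(2) by simp
  then have "(M *\<^sub>v x) \<bullet>c (M *\<^sub>v x) = complex_of_real c * ((M *\<^sub>v x) \<bullet>c x)"
    using ev Mx x by (simp add: cscalar_prod_smult_left)
  then show ?thesis
    by simp
qed

lemma orthogonal_mult_self_eigen:
  fixes M L :: "complex mat"
  assumes M: "M \<in> carrier_mat n n" and L: "L \<in> carrier_mat n n" and orth: "M * L = 0\<^sub>m n n"
    and x: "x \<in> carrier_vec n" and ev: "(M - L) *\<^sub>v x = complex_of_real d \<cdot>\<^sub>v x"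
  shows "M *\<^sub>v (M *\<^sub>v x) = complex_of_real d \<cdot>\<^sub>v (M *\<^sub>v x)"
proof -
  have "M * (M - L) = M * M - M * L"
    by (rule mult_minus_distrib_mat[OF M M L])
  also have "\<dots> = M * M"
    unfolding orth by (rule eq_matI) (use M in simp_all)
  finally have "M *\<^sub>v (M *\<^sub>v x) = M *\<^sub>v ((M - L) *\<^sub>v x)"
    using M L x by (metis assoc_mult_mat_vec minus_carrier_mat)
  then show ?thesis
    using M x by (simp add: ev mult_mat_vec)
qed

lemma complementary_psd_eigenvector:
  fixes P N :: "complex mat"
  assumes P: "P \<in> carrier_mat n n" "psd P" and N: "N \<in> carrier_mat n n" "psd N"
    and PN: "P * N = 0\<^sub>m n n" and x: "x \<in> carrier_vec n"
    and ev: "(P - N) *\<^sub>v x = complex_of_real d \<cdot>\<^sub>v x"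
  shows "P *\<^sub>v x = complex_of_real (max d 0) \<cdot>\<^sub>v x"
proof -
  have aP: "mat_adjoint P = P" and aN: "mat_adjoint N = N"
    using P N by (auto intro: psd_mat_adjoint)
  have NP: "N * P = 0\<^sub>m n n"
    using mat_adjoint_mult[OF P(1) N(1)] PN aP aN by simp
  have Px: "P *\<^sub>v x \<in> carrier_vec n" and Nx: "N *\<^sub>v x \<in> carrier_vec n"
    using P N x by auto
  have split: "(P - N) *\<^sub>v x = P *\<^sub>v x - N *\<^sub>v x"
    by (rule minus_mult_distrib_mat_vec[OF P(1) N(1) x])
  have PPx: "P *\<^sub>v (P *\<^sub>v x) = complex_of_real d \<cdot>\<^sub>v (P *\<^sub>v x)"
    by (rule orthogonal_mult_self_eigen[OF P(1) N(1) PN x ev])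
  have "N - P = - (P - N)"
    by (rule eq_matI) (use P N in simp_all)
  then have "(N - P) *\<^sub>v x = complex_of_real (- d) \<cdot>\<^sub>v x"
    using P N x ev by (auto intro!: eq_vecI)
  then have NNx: "N *\<^sub>v (N *\<^sub>v x) = complex_of_real (- d) \<cdot>\<^sub>v (N *\<^sub>v x)"
    by (rule orthogonal_mult_self_eigen[OF N(1) P(1) NP x])
  show ?thesis
  proof (cases "0 \<le> d")
    case True
    have "Re ((N *\<^sub>v x) \<bullet>c (N *\<^sub>v x)) = - d * Re ((N *\<^sub>v x) \<bullet>c x)"
      by (rule self_adjoint_norm_sq_eigen[OF N(1) aN x NNx])
    also have "\<dots> \<le> 0"
      using True psd_quadratic_form_nonneg[OF N(2,1) x] by simp
    finally have "N *\<^sub>v x = 0\<^sub>v n"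
      by (rule eq_zero_if_Re_cscalar_prod_self_nonpos[OF Nx])
    then show ?thesis
      using True ev split Px by simp
  next
    case False
    have "Re ((P *\<^sub>v x) \<bullet>c (P *\<^sub>v x)) = d * Re ((P *\<^sub>v x) \<bullet>c x)"
      by (rule self_adjoint_norm_sq_eigen[OF P(1) aP x PPx])
    also have "\<dots> \<le> 0"
      using False psd_quadratic_form_nonneg[OF P(2,1) x] by (simp add: mult_nonpos_nonneg)
    finally have "P *\<^sub>v x = 0\<^sub>v n"
      by (rule eq_zero_if_Re_cscalar_prod_self_nonpos[OF Px])
    then show ?thesis
      using False x by (auto intro!: eq_vecI)
  qed
qed

context unitary_frame
begin

lemma jordan_parts_spectral_mat:
  "jordan_parts (spectral_mat n U d) =
    (spectral_mat n U (\<lambda>i. max (d i) 0), spectral_mat n U (\<lambda>i. max (- d i) 0))"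
proof -
  let ?A = "spectral_mat n U d"
  let ?P = "spectral_mat n U (\<lambda>i. max (d i) 0)"
  let ?N = "spectral_mat n U (\<lambda>i. max (- d i) 0)"
  have "(\<lambda>i. max (d i) 0 - max (- d i) 0) = d" "(\<lambda>i. max (d i) 0 * max (- d i) 0) = (\<lambda>i. 0)"
    by (auto simp: max_def)
  then have decomp: "?A = ?P - ?N" and orth: "?P * ?N = 0\<^sub>m n n"
    by (simp_all add: spectral_mat_minus spectral_mat_mult spectral_mat_zero)
  have unique: "P = ?P \<and> N = ?N"
    if P: "P \<in> carrier_mat n n" "psd P" and N: "N \<in> carrier_mat n n" "psd N"
      and A: "?A = P - N" and PN: "P * N = 0\<^sub>m n n" for P N
  proof -
    have "P *\<^sub>v col U j = complex_of_real (max (d j) 0) \<cdot>\<^sub>v col U j" if j: "j < n" for j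
      using A spectral_mat_col[OF j, of d] by (intro complementary_psd_eigenvector[OF P N PN]) simp_all
    then have P_eq: "P = ?P"
      by (rule eq_spectral_mat_if_eigen_cols[OF P(1), of "\<lambda>i. max (d i) 0"])
    have "N = P - ?A"
      unfolding A using P N by (auto intro!: eq_matI)
    also have "\<dots> = ?N"
      unfolding P_eq spectral_mat_minus by (rule arg_cong[where f = "spectral_mat n U"]) auto
    finally show ?thesis
      using P_eq by simp
  qed
  show ?thesis
    unfolding jordan_parts_def
  proof (rule the_equality)
    show "case (?P, ?N) of (P, N) \<Rightarrow> P \<in> carrier_mat (dim_row ?A) (dim_row ?A) \<and>
        N \<in> carrier_mat (dim_row ?A) (dim_row ?A) \<and> psd P \<and> psd N \<and> ?A = P - N \<and>
        P * N = 0\<^sub>m (dim_row ?A) (dim_row ?A)"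
      using decomp orth by (auto intro!: spectral_mat_psd)
  qed (use unique in auto)
qed

lemma pos_part_spectral_mat: "pos_part (spectral_mat n U d) = spectral_mat n U (\<lambda>i. max (d i) 0)"
  unfolding pos_part_def jordan_parts_spectral_mat by simp

lemma neg_part_spectral_mat: "neg_part (spectral_mat n U d) = spectral_mat n U (\<lambda>i. max (- d i) 0)"
  unfolding neg_part_def jordan_parts_spectral_mat by simp

end

section \<open>Operator norms\<close>

lemma vnorm_smult_unit:
  assumes "u \<bullet>c u = 1"
  shows "vnorm (complex_of_real r \<cdot>\<^sub>v u) = \<bar>r\<bar>"
proof -
  have "(complex_of_real r \<cdot>\<^sub>v u) \<bullet>c (complex_of_real r \<cdot>\<^sub>v u) =
      complex_of_real r * (u \<bullet>c (complex_of_real r \<cdot>\<^sub>v u))"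
    by (rule cscalar_prod_smult_left) simp
  also have "u \<bullet>c (complex_of_real r \<cdot>\<^sub>v u) = cnj (complex_of_real r) * (u \<bullet>c u)"
    by (rule cscalar_prod_smult_right) simp
  also have "cnj (complex_of_real r) * (u \<bullet>c u) = complex_of_real r"
    using assms by simp
  finally have e: "(complex_of_real r \<cdot>\<^sub>v u) \<bullet>c (complex_of_real r \<cdot>\<^sub>v u) =
      complex_of_real r * complex_of_real r" .
  show ?thesis
    unfolding vnorm_eq_sqrt_cscalar_prod e by simp
qed

context unitary_frame
begin

lemma spectral_mat_vnorm_le:
  assumes v: "v \<in> carrier_vec n" and m: "0 \<le> m" and bound: "\<And>i. i < n \<Longrightarrow> \<bar>d i\<bar> \<le> m"
  shows "vnorm (spectral_mat n U d *\<^sub>v v) \<le> m * vnorm v"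
proof -
  let ?c = "mat_adjoint U *\<^sub>v v"
  have "Re ((spectral_mat n U d *\<^sub>v v) \<bullet>c (spectral_mat n U d *\<^sub>v v)) =
      (\<Sum>i<n. (d i)\<^sup>2 * (cmod (?c $ i))\<^sup>2)"
    by (rule spectral_mat_norm_sq[OF v])
  also have "\<dots> \<le> (\<Sum>i<n. m\<^sup>2 * (cmod (?c $ i))\<^sup>2)"
  proof (rule sum_mono)
    fix i assume "i \<in> {..<n}"
    then have "\<bar>d i\<bar>\<^sup>2 \<le> m\<^sup>2"
      using bound by (intro power_mono) auto
    then show "(d i)\<^sup>2 * (cmod (?c $ i))\<^sup>2 \<le> m\<^sup>2 * (cmod (?c $ i))\<^sup>2"
      by (intro mult_right_mono) auto
  qed
  also have "\<dots> = m\<^sup>2 * Re (v \<bullet>c v)"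
    unfolding Re_cscalar_prod_self_coords[OF v] by (simp add: sum_distrib_left)
  finally show ?thesis
    unfolding vnorm_eq_sqrt_cscalar_prod using m
    by (metis real_sqrt_le_mono real_sqrt_mult real_sqrt_abs abs_of_nonneg)
qed

lemma op_norm_spectral_mat_le:
  assumes n: "0 < n" and m: "0 \<le> m" and bound: "\<And>i. i < n \<Longrightarrow> \<bar>d i\<bar> \<le> m"
  shows "op_norm (spectral_mat n U d) \<le> m"
  unfolding op_norm_def spectral_mat_dims
proof (rule cSup_least)
  have "vnorm (col U 0) = 1"
    using col_unit[OF n] by (simp add: vnorm_eq_sqrt_cscalar_prod)
  then show "{vnorm (spectral_mat n U d *\<^sub>v v) |v. v \<in> carrier_vec n \<and> vnorm v = 1} \<noteq> {}"
    using col_carrier by blast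
next
  fix x assume "x \<in> {vnorm (spectral_mat n U d *\<^sub>v v) |v. v \<in> carrier_vec n \<and> vnorm v = 1}"
  then show "x \<le> m"
    using spectral_mat_vnorm_le[OF _ m bound] by force
qed

lemma abs_le_op_norm_spectral_mat:
  assumes j: "j < n"
  shows "\<bar>d j\<bar> \<le> op_norm (spectral_mat n U d)"
  unfolding op_norm_def spectral_mat_dims
proof (rule cSup_upper)
  have "vnorm (spectral_mat n U d *\<^sub>v col U j) = \<bar>d j\<bar>"
    unfolding spectral_mat_col[OF j] by (rule vnorm_smult_unit[OF col_unit[OF j]])
  moreover have "vnorm (col U j) = 1"
    using col_unit[OF j] by (simp add: vnorm_eq_sqrt_cscalar_prod)
  ultimately show "\<bar>d j\<bar> \<in> {vnorm (spectral_mat n U d *\<^sub>v v) |v. v \<in> carrier_vec n \<and> vnorm v = 1}"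
    using col_carrier by force
next
  let ?m = "\<Sum>i<n. \<bar>d i\<bar>"
  have "\<bar>d i\<bar> \<le> ?m" if "i < n" for i
    using that by (intro member_le_sum) auto
  then have le_m: "vnorm (spectral_mat n U d *\<^sub>v v) \<le> ?m * vnorm v" if "v \<in> carrier_vec n" for v
    using that by (intro spectral_mat_vnorm_le sum_nonneg) auto
  show "bdd_above {vnorm (spectral_mat n U d *\<^sub>v v) |v. v \<in> carrier_vec n \<and> vnorm v = 1}"
    unfolding bdd_above_def
  proof (intro exI[of _ ?m] ballI)
    fix x assume "x \<in> {vnorm (spectral_mat n U d *\<^sub>v v) |v. v \<in> carrier_vec n \<and> vnorm v = 1}"
    then obtain v where "v \<in> carrier_vec n" "vnorm v = 1" "x = vnorm (spectral_mat n U d *\<^sub>v v)"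
      by blast
    then show "x \<le> ?m"
      using le_m[of v] by simp
  qed
qed

end

lemma neg_part_eq_pos_part_uminus:
  assumes A: "A \<in> herm n"
  shows "neg_part A = pos_part (- A)"
proof -
  obtain U d where U: "unitary n U" and A_eq: "A = spectral_mat n U d"
    using herm_spectral_decomposition[OF A] by blast
  interpret unitary_frame n U
    using U by unfold_locales
  show ?thesis
    unfolding A_eq spectral_mat_uminus neg_part_spectral_mat pos_part_spectral_mat ..
qed

lemma quadratic_form_le_op_norm_pos_part:
  assumes B: "B \<in> herm k" and v: "v \<in> carrier_vec k"
  shows "Re ((B *\<^sub>v v) \<bullet>c v) \<le> op_norm (pos_part B) * Re (v \<bullet>c v)"
proof -
  obtain U d where U: "unitary k U" and B_eq: "B = spectral_mat k U d"
    using herm_spectral_decomposition[OF B] by blast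
  interpret unitary_frame k U
    using U by unfold_locales
  let ?c = "mat_adjoint U *\<^sub>v v"
  have "d i \<le> op_norm (pos_part B)" if "i < k" for i
    using abs_le_op_norm_spectral_mat[OF that, of "\<lambda>i. max (d i) 0"]
    unfolding B_eq pos_part_spectral_mat by linarith
  then have "(\<Sum>i<k. d i * (cmod (?c $ i))\<^sup>2) \<le> (\<Sum>i<k. op_norm (pos_part B) * (cmod (?c $ i))\<^sup>2)"
    by (intro sum_mono mult_right_mono) auto
  then show ?thesis
    unfolding B_eq spectral_mat_quadratic_form[OF v] Re_cscalar_prod_self_coords[OF v]
    by (simp add: sum_distrib_left)
qed

lemma quadratic_form_ge_neg_op_norm_neg_part:
  assumes B: "B \<in> herm k" and v: "v \<in> carrier_vec k"
  shows "- op_norm (neg_part B) * Re (v \<bullet>c v) \<le> Re ((B *\<^sub>v v) \<bullet>c v)"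
proof -
  have "Re ((- B *\<^sub>v v) \<bullet>c v) \<le> op_norm (neg_part B) * Re (v \<bullet>c v)"
    unfolding neg_part_eq_pos_part_uminus[OF B]
    by (rule quadratic_form_le_op_norm_pos_part[OF herm_uminus[OF B] v])
  then show ?thesis
    using herm_carrier[OF B] v by simp
qed

lemma op_norm_pos_part_eigenvector:
  assumes A: "A \<in> herm n" and not_nsd: "\<not> psd (- A)"
  shows "0 < op_norm (pos_part A) \<and> (\<exists>u. u \<in> carrier_vec n \<and> u \<bullet>c u = 1 \<and>
    A *\<^sub>v u = complex_of_real (op_norm (pos_part A)) \<cdot>\<^sub>v u)"
proof -
  obtain U d where U: "unitary n U" and A_eq: "A = spectral_mat n U d"
    using herm_spectral_decomposition[OF A] by blast
  interpret unitary_frame n U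
    using U by unfold_locales
  have "\<exists>i<n. 0 < d i"
  proof (rule ccontr)
    assume "\<not> (\<exists>i<n. 0 < d i)"
    then have "psd (spectral_mat n U (\<lambda>i. - d i))"
      by (intro spectral_mat_psd) (meson leI neg_0_le_iff_le)
    with not_nsd show False
      unfolding A_eq spectral_mat_uminus by simp
  qed
  then obtain i where i: "i < n" "0 < d i"
    by blast
  define \<alpha> where "\<alpha> = Max (d ` {..<n})"
  have fin: "finite (d ` {..<n})" "d ` {..<n} \<noteq> {}"
    using i by auto
  obtain j where j: "j < n" "d j = \<alpha>"
    using Max_in[OF fin] unfolding \<alpha>_def by auto
  have le_\<alpha>: "d l \<le> \<alpha>" if "l < n" for l
    unfolding \<alpha>_def using fin that by auto
  have \<alpha>_pos: "0 < \<alpha>"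
    using i le_\<alpha> by force
  have "op_norm (pos_part A) \<le> \<alpha>"
    unfolding A_eq pos_part_spectral_mat
    using \<alpha>_pos le_\<alpha> i(1) by (intro op_norm_spectral_mat_le) auto
  moreover have "\<alpha> \<le> op_norm (pos_part A)"
    using abs_le_op_norm_spectral_mat[OF j(1), of "\<lambda>i. max (d i) 0"] j \<alpha>_pos
    unfolding A_eq pos_part_spectral_mat by simp
  ultimately have "op_norm (pos_part A) = \<alpha>"
    by simp
  moreover have "A *\<^sub>v col U j = complex_of_real \<alpha> \<cdot>\<^sub>v col U j"
    unfolding A_eq spectral_mat_col[OF j(1)] j(2) ..
  ultimately show ?thesis
    using \<alpha>_pos col_unit[OF j(1)] col_carrier by metis
qed

lemma op_norm_neg_part_eigenvector:
  assumes A: "A \<in> herm n" and not_psd: "\<not> psd A"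
  shows "0 < op_norm (neg_part A) \<and> (\<exists>w. w \<in> carrier_vec n \<and> w \<bullet>c w = 1 \<and>
    A *\<^sub>v w = complex_of_real (- op_norm (neg_part A)) \<cdot>\<^sub>v w)"
proof -
  obtain w where pos: "0 < op_norm (neg_part A)" and w: "w \<in> carrier_vec n" "w \<bullet>c w = 1"
    and ev: "- A *\<^sub>v w = complex_of_real (op_norm (neg_part A)) \<cdot>\<^sub>v w"
    using op_norm_pos_part_eigenvector[OF herm_uminus[OF A]] not_psd
    unfolding neg_part_eq_pos_part_uminus[OF A] by auto
  have "A *\<^sub>v w = - (- A *\<^sub>v w)"
    using herm_carrier[OF A] w by simp
  also have "\<dots> = complex_of_real (- op_norm (neg_part A)) \<cdot>\<^sub>v w"
    unfolding ev by (auto intro!: eq_vecI)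
  finally show ?thesis
    using pos w by blast
qed

section \<open>A positive unital map through two eigenvectors\<close>

lemma quadratic_form_add:
  fixes X Y :: "complex mat"
  assumes X: "X \<in> carrier_mat n n" and Y: "Y \<in> carrier_mat n n" and z: "z \<in> carrier_vec n"
  shows "((X + Y) *\<^sub>v z) \<bullet>c z = (X *\<^sub>v z) \<bullet>c z + (Y *\<^sub>v z) \<bullet>c z"
  unfolding add_mult_distrib_mat_vec[OF X Y z]
  by (rule add_scalar_prod_distrib[of _ n]) (use X Y z in auto)

lemma quadratic_form_smult:
  fixes X :: "complex mat"
  assumes X: "X \<in> carrier_mat n n" and z: "z \<in> carrier_vec n"
  shows "((r \<cdot>\<^sub>m X) *\<^sub>v z) \<bullet>c z = r * ((X *\<^sub>v z) \<bullet>c z)"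
proof -
  have "(r \<cdot>\<^sub>m X) *\<^sub>v z = r \<cdot>\<^sub>v (X *\<^sub>v z)"
    using X z by (auto intro!: eq_vecI simp: scalar_prod_def sum_distrib_left mult.assoc)
  then show ?thesis
    using X z by (simp add: cscalar_prod_smult_left)
qed

lemma quadratic_form_real_lincomb:
  fixes X Y :: "complex mat"
  assumes X: "X \<in> carrier_mat n n" and Y: "Y \<in> carrier_mat n n" and z: "z \<in> carrier_vec n"
  shows "Re (((complex_of_real a \<cdot>\<^sub>m X + complex_of_real b \<cdot>\<^sub>m Y) *\<^sub>v z) \<bullet>c z) =
    a * Re ((X *\<^sub>v z) \<bullet>c z) + b * Re ((Y *\<^sub>v z) \<bullet>c z)"
proof -
  have "((complex_of_real a \<cdot>\<^sub>m X + complex_of_real b \<cdot>\<^sub>m Y) *\<^sub>v z) \<bullet>c z =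
      ((complex_of_real a \<cdot>\<^sub>m X) *\<^sub>v z) \<bullet>c z + ((complex_of_real b \<cdot>\<^sub>m Y) *\<^sub>v z) \<bullet>c z"
    by (rule quadratic_form_add) (use X Y z in auto)
  also have "\<dots> = complex_of_real a * ((X *\<^sub>v z) \<bullet>c z) + complex_of_real b * ((Y *\<^sub>v z) \<bullet>c z)"
    by (simp only: quadratic_form_smult[OF X z] quadratic_form_smult[OF Y z])
  finally show ?thesis
    by simp
qed

definition two_point_map ::
  "complex vec \<Rightarrow> complex vec \<Rightarrow> complex mat \<Rightarrow> complex mat \<Rightarrow> complex mat \<Rightarrow> complex mat" where
  "two_point_map u w P Q X = ((X *\<^sub>v u) \<bullet>c u) \<cdot>\<^sub>m P + ((X *\<^sub>v w) \<bullet>c w) \<cdot>\<^sub>m Q"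

lemma two_point_map_herm:
  assumes X: "X \<in> herm n" and u: "u \<in> carrier_vec n" and w: "w \<in> carrier_vec n"
  shows "two_point_map u w P Q X =
    complex_of_real (Re ((X *\<^sub>v u) \<bullet>c u)) \<cdot>\<^sub>m P + complex_of_real (Re ((X *\<^sub>v w) \<bullet>c w)) \<cdot>\<^sub>m Q"
  unfolding two_point_map_def
  using herm_quadratic_form_real[OF X u] herm_quadratic_form_real[OF X w] by simp

lemma PU_map_two_point_map:
  assumes u: "u \<in> carrier_vec n" "u \<bullet>c u = 1" and w: "w \<in> carrier_vec n" "w \<bullet>c w = 1"
    and P: "P \<in> herm k" "psd P" and Q: "Q \<in> herm k" "psd Q" and PQ: "P + Q = 1\<^sub>m k"
  shows "PU_map n k (two_point_map u w P Q)"
  unfolding PU_map_def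
proof (intro conjI ballI allI impI)
  have Pc: "P \<in> carrier_mat k k" and Qc: "Q \<in> carrier_mat k k"
    using P Q by (auto simp: herm_carrier)
  show herm: "two_point_map u w P Q X \<in> herm k" if X: "X \<in> herm n" for X
    unfolding two_point_map_herm[OF X u(1) w(1)] using P Q by (intro herm_real_lincomb) auto
  fix X assume X: "X \<in> herm n"
  then have Xc: "X \<in> carrier_mat n n"
    by (rule herm_carrier)
  show "two_point_map u w P Q (X + Y) = two_point_map u w P Q X + two_point_map u w P Q Y"
    if Y: "Y \<in> herm n" for Y
    unfolding two_point_map_def
      quadratic_form_add[OF Xc herm_carrier[OF Y] u(1)] quadratic_form_add[OF Xc herm_carrier[OF Y] w(1)]
    by (rule eq_matI) (use Pc Qc in \<open>auto simp: ring_distribs\<close>)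
  show "two_point_map u w P Q (complex_of_real r \<cdot>\<^sub>m X) =
      complex_of_real r \<cdot>\<^sub>m two_point_map u w P Q X" for r
    unfolding two_point_map_def quadratic_form_smult[OF Xc u(1)] quadratic_form_smult[OF Xc w(1)]
    by (rule eq_matI) (use Pc Qc in \<open>auto simp: ring_distribs\<close>)
  assume "psd X"
  then have "0 \<le> Re ((X *\<^sub>v u) \<bullet>c u)" "0 \<le> Re ((X *\<^sub>v w) \<bullet>c w)"
    using Xc u w by (auto intro: psd_quadratic_form_nonneg)
  then have "0 \<le> Re ((two_point_map u w P Q X *\<^sub>v v) \<bullet>c v)" if v: "v \<in> carrier_vec k" for v
    unfolding two_point_map_herm[OF X u(1) w(1)] quadratic_form_real_lincomb[OF Pc Qc v]
    using psd_quadratic_form_nonneg[OF P(2) Pc v] psd_quadratic_form_nonneg[OF Q(2) Qc v] by simp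
  then show "psd (two_point_map u w P Q X)"
    unfolding psd_def using herm[OF X] herm_carrier[OF herm[OF X]] by simp
next
  have "(1\<^sub>m n *\<^sub>v u) \<bullet>c u = 1" "(1\<^sub>m n *\<^sub>v w) \<bullet>c w = 1"
    using u w by auto
  then show "two_point_map u w P Q (1\<^sub>m n) = 1\<^sub>m k"
    unfolding two_point_map_def PQ[symmetric]
    using herm_carrier[OF P(1)] herm_carrier[OF Q(1)] by (auto intro!: eq_matI)
qed

lemma psd_affine_herm:
  assumes B: "B \<in> herm k"
    and nonneg: "\<And>v. v \<in> carrier_vec k \<Longrightarrow> 0 \<le> a * Re ((B *\<^sub>v v) \<bullet>c v) + b * Re (v \<bullet>c v)"
  shows "psd (complex_of_real a \<cdot>\<^sub>m B + complex_of_real b \<cdot>\<^sub>m 1\<^sub>m k)"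
proof -
  have M: "complex_of_real a \<cdot>\<^sub>m B + complex_of_real b \<cdot>\<^sub>m 1\<^sub>m k \<in> herm k"
    using B herm_one by (rule herm_real_lincomb)
  have "0 \<le> Re (((complex_of_real a \<cdot>\<^sub>m B + complex_of_real b \<cdot>\<^sub>m 1\<^sub>m k) *\<^sub>v v) \<bullet>c v)"
    if v: "v \<in> carrier_vec k" for v
    unfolding quadratic_form_real_lincomb[OF herm_carrier[OF B] one_carrier_mat v]
    using nonneg[OF v] v by simp
  then show ?thesis
    unfolding psd_def using M herm_carrier[OF M] by simp
qed

lemma affine_decomposition_between:
  assumes B: "B \<in> herm k" and \<beta>_less_\<alpha>: "\<beta> < \<alpha>"
    and lower: "\<And>v. v \<in> carrier_vec k \<Longrightarrow> \<beta> * Re (v \<bullet>c v) \<le> Re ((B *\<^sub>v v) \<bullet>c v)"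
    and upper: "\<And>v. v \<in> carrier_vec k \<Longrightarrow> Re ((B *\<^sub>v v) \<bullet>c v) \<le> \<alpha> * Re (v \<bullet>c v)"
  shows "\<exists>P Q. P \<in> herm k \<and> psd P \<and> Q \<in> herm k \<and> psd Q \<and> P + Q = 1\<^sub>m k \<and>
    complex_of_real \<alpha> \<cdot>\<^sub>m P + complex_of_real \<beta> \<cdot>\<^sub>m Q = B"
proof -
  define \<gamma> where "\<gamma> = 1 / (\<alpha> - \<beta>)"
  have \<gamma>_pos: "0 < \<gamma>" and \<gamma>: "\<gamma> * (\<alpha> - \<beta>) = 1"
    unfolding \<gamma>_def using \<beta>_less_\<alpha> by auto
  define P where "P = complex_of_real \<gamma> \<cdot>\<^sub>m B + complex_of_real (- \<gamma> * \<beta>) \<cdot>\<^sub>m 1\<^sub>m k"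
  define Q where "Q = complex_of_real (- \<gamma>) \<cdot>\<^sub>m B + complex_of_real (\<gamma> * \<alpha>) \<cdot>\<^sub>m 1\<^sub>m k"
  have Bc: "B \<in> carrier_mat k k"
    using B by (rule herm_carrier)
  have P: "P \<in> herm k"
    unfolding P_def using B herm_one by (rule herm_real_lincomb)
  have Q: "Q \<in> herm k"
    unfolding Q_def using B herm_one by (rule herm_real_lincomb)
  have "psd P"
    unfolding P_def
  proof (rule psd_affine_herm[OF B])
    fix v :: "complex vec" assume v: "v \<in> carrier_vec k"
    show "0 \<le> \<gamma> * Re ((B *\<^sub>v v) \<bullet>c v) + - \<gamma> * \<beta> * Re (v \<bullet>c v)"
      using mult_left_mono[OF lower[OF v] less_imp_le[OF \<gamma>_pos]] by (simp add: algebra_simps)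
  qed
  moreover have "psd Q"
    unfolding Q_def
  proof (rule psd_affine_herm[OF B])
    fix v :: "complex vec" assume v: "v \<in> carrier_vec k"
    show "0 \<le> - \<gamma> * Re ((B *\<^sub>v v) \<bullet>c v) + \<gamma> * \<alpha> * Re (v \<bullet>c v)"
      using mult_left_mono[OF upper[OF v] less_imp_le[OF \<gamma>_pos]] by (simp add: algebra_simps)
  qed
  moreover have "P + Q = 1\<^sub>m k"
  proof (rule eq_matI)
    fix i j assume "i < dim_row (1\<^sub>m k :: complex mat)" "j < dim_col (1\<^sub>m k :: complex mat)"
    then have "(P + Q) $$ (i,j) = complex_of_real (\<gamma> * (\<alpha> - \<beta>)) * 1\<^sub>m k $$ (i,j)"
      unfolding P_def Q_def using Bc by (simp add: algebra_simps)
    then show "(P + Q) $$ (i,j) = 1\<^sub>m k $$ (i,j)"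
      unfolding \<gamma> by simp
  qed (use Bc in \<open>simp_all add: P_def Q_def\<close>)
  moreover have "complex_of_real \<alpha> \<cdot>\<^sub>m P + complex_of_real \<beta> \<cdot>\<^sub>m Q = B"
  proof (rule eq_matI)
    fix i j assume "i < dim_row B" "j < dim_col B"
    then have "(complex_of_real \<alpha> \<cdot>\<^sub>m P + complex_of_real \<beta> \<cdot>\<^sub>m Q) $$ (i,j) =
        complex_of_real (\<gamma> * (\<alpha> - \<beta>)) * B $$ (i,j)"
      unfolding P_def Q_def using Bc by (simp add: algebra_simps)
    then show "(complex_of_real \<alpha> \<cdot>\<^sub>m P + complex_of_real \<beta> \<cdot>\<^sub>m Q) $$ (i,j) = B $$ (i,j)"
      unfolding \<gamma> by simp
  qed (use Bc in \<open>simp_all add: P_def Q_def\<close>)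
  ultimately show ?thesis
    using P Q by blast
qed

lemma PU_map_onto_if_between_eigenvalues:
  assumes B: "B \<in> herm k"
    and u: "u \<in> carrier_vec n" "u \<bullet>c u = 1" "A *\<^sub>v u = complex_of_real \<alpha> \<cdot>\<^sub>v u"
    and w: "w \<in> carrier_vec n" "w \<bullet>c w = 1" "A *\<^sub>v w = complex_of_real \<beta> \<cdot>\<^sub>v w"
    and \<beta>_less_\<alpha>: "\<beta> < \<alpha>"
    and lower: "\<And>v. v \<in> carrier_vec k \<Longrightarrow> \<beta> * Re (v \<bullet>c v) \<le> Re ((B *\<^sub>v v) \<bullet>c v)"
    and upper: "\<And>v. v \<in> carrier_vec k \<Longrightarrow> Re ((B *\<^sub>v v) \<bullet>c v) \<le> \<alpha> * Re (v \<bullet>c v)"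
  shows "\<exists>\<Phi>. PU_map n k \<Phi> \<and> \<Phi> A = B"
proof -
  obtain P Q where P: "P \<in> herm k" "psd P" and Q: "Q \<in> herm k" "psd Q"
    and PQ: "P + Q = 1\<^sub>m k" and B_eq: "complex_of_real \<alpha> \<cdot>\<^sub>m P + complex_of_real \<beta> \<cdot>\<^sub>m Q = B"
    using affine_decomposition_between[OF B \<beta>_less_\<alpha> lower upper] by blast
  have "PU_map n k (two_point_map u w P Q)"
    by (rule PU_map_two_point_map[OF u(1,2) w(1,2) P Q PQ])
  moreover have "two_point_map u w P Q A = B"
    using u w B_eq by (simp add: two_point_map_def cscalar_prod_smult_left)
  ultimately show ?thesis
    by blast
qed

lemma herm_zero_psd: "A \<in> herm 0 \<Longrightarrow> psd A"
  unfolding psd_def using herm_carrier[of A 0] by (auto simp: scalar_prod_def)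

theorem mainTheorem10:
  fixes \<mu> :: "complex mat \<Rightarrow> real" and A B :: "complex mat" and n k :: nat
  assumes "PU_monotone \<mu>"
    and "A \<in> herm n" and "B \<in> herm k"
    and "\<not> psd A" and "\<not> psd (- A)"
    and "\<not> psd B" and "\<not> psd (- B)"
    and "op_norm (pos_part A) \<ge> op_norm (pos_part B)"
    and "op_norm (neg_part A) \<ge> op_norm (neg_part B)"
  shows "\<mu> A \<ge> \<mu> B"
proof -
  note mono = assms(1) and A = assms(2) and B = assms(3)
  have n: "0 < n" and k: "0 < k"
    using herm_zero_psd A B assms(4,6) by (auto intro: gr0I)
  obtain u where \<alpha>: "0 < op_norm (pos_part A)" and
    u: "u \<in> carrier_vec n" "u \<bullet>c u = 1" "A *\<^sub>v u = complex_of_real (op_norm (pos_part A)) \<cdot>\<^sub>v u"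
    using op_norm_pos_part_eigenvector[OF A assms(5)] by blast
  obtain w where \<beta>: "0 < op_norm (neg_part A)" and
    w: "w \<in> carrier_vec n" "w \<bullet>c w = 1" "A *\<^sub>v w = complex_of_real (- op_norm (neg_part A)) \<cdot>\<^sub>v w"
    using op_norm_neg_part_eigenvector[OF A assms(4)] by blast
  have "- op_norm (neg_part A) * Re (v \<bullet>c v) \<le> Re ((B *\<^sub>v v) \<bullet>c v)" if "v \<in> carrier_vec k" for v
    using quadratic_form_ge_neg_op_norm_neg_part[OF B that] assms(9) cscalar_prod_self_real(2)[of v]
    by (smt (verit) mult_right_mono)
  moreover have "Re ((B *\<^sub>v v) \<bullet>c v) \<le> op_norm (pos_part A) * Re (v \<bullet>c v)" if "v \<in> carrier_vec k" for v
    using quadratic_form_le_op_norm_pos_part[OF B that] assms(8) cscalar_prod_self_real(2)[of v]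
    by (smt (verit) mult_right_mono)
  ultimately obtain \<Phi> where "PU_map n k \<Phi>" "\<Phi> A = B"
    using PU_map_onto_if_between_eigenvalues[OF B u w] \<alpha> \<beta> by force
  then show ?thesis
    using mono n k A unfolding PU_monotone_def by metis
qed

end
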